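(* Let $\Gamma\subset\mathrm{PSL}_2\mathbb{C}$ be a finite-covolume Kleinian group whose traces all lie in $R$, the ring of integers of the number field $\mathbb{Q}(\mathrm{tr}\,\Gamma)$. If $A,B,X,Y\in\Gamma$ satisfy $\langle A,B\rangle=\Gamma=\langle X,Y\rangle$, then $2-\mathrm{tr}[X,Y]$ is a unit multiple of $2-\mathrm{tr}[A,B]$ in $R$, i.e. $2-\mathrm{tr}[X,Y]=u\,(2-\mathrm{tr}[A,B])$ for some $u\in R^*$.
   Context: $\mathbb{Q}(\mathrm{tr}\,\Gamma)$ is the field generated over $\mathbb{Q}$ by the traces of (lifts to $\mathrm{SL}_2\mathbb{C}$ of) elements of $\Gamma$. $[X,Y]=XYX^{-1}Y^{-1}$; its trace is independent of the choice of lifts. *)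

theory Defs
  imports "HOL-Analysis.Analysis" "HOL-Computational_Algebra.Polynomial"
begin

type_synonym cmat = "complex^2^2"

definition SL2C :: "cmat set" where
  "SL2C = {M. det M = 1}"

(* preimage in SL(2,C) of a subgroup of PSL(2,C): a subgroup of SL(2,C) containing -I *)
definition is_psl_subgroup :: "cmat set \<Rightarrow> bool" where
  "is_psl_subgroup G \<longleftrightarrow> G \<subseteq> SL2C \<and> mat 1 \<in> G \<and> - mat 1 \<in> G \<and>
     (\<forall>g\<in>G. \<forall>h\<in>G. g ** h \<in> G) \<and> (\<forall>g\<in>G. matrix_inv g \<in> G)"

inductive_set gen_sub :: "cmat set \<Rightarrow> cmat set" for S where
  gen_one: "mat 1 \<in> gen_sub S"
| gen_base: "s \<in> S \<Longrightarrow> s \<in> gen_sub S"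
| gen_mult: "g \<in> gen_sub S \<Longrightarrow> h \<in> gen_sub S \<Longrightarrow> g ** h \<in> gen_sub S"
| gen_inv: "g \<in> gen_sub S \<Longrightarrow> matrix_inv g \<in> gen_sub S"

(* discreteness in SL(2,C) (equivalent to discreteness of the image in PSL(2,C)) *)
definition discrete_group :: "cmat set \<Rightarrow> bool" where
  "discrete_group G \<longleftrightarrow> (\<forall>g\<in>G. \<exists>e>0. \<forall>h\<in>G. dist h g < e \<longrightarrow> h = g)"

(* upper half-space model of H^3: points (z,t) with t > 0 *)
definition H3 :: "(complex \<times> real) set" where
  "H3 = {p. snd p > 0}"

(* action of SL(2,C) on the upper half-space *)
definition mobius3 :: "cmat \<Rightarrow> complex \<times> real \<Rightarrow> complex \<times> real" where
  "mobius3 M p = (let a = M$1$1; b = M$1$2; c = M$2$1; d = M$2$2; z = fst p; t = snd p;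
      D = (cmod (c * z + d))^2 + (cmod c)^2 * t^2
    in (((a * z + b) * cnj (c * z + d) + a * cnj c * complex_of_real (t^2)) / complex_of_real D, t / D))"

definition hyp_measure :: "(complex \<times> real) measure" where
  "hyp_measure = density lborel (\<lambda>p. if snd p > 0 then ennreal (1 / (snd p)^3) else 0)"

definition finite_covolume :: "cmat set \<Rightarrow> bool" where
  "finite_covolume G \<longleftrightarrow> (\<exists>F. F \<in> sets lborel \<and> F \<subseteq> H3 \<and> emeasure hyp_measure F < \<infinity> \<and>
      (\<forall>p\<in>H3. \<exists>g\<in>G. \<exists>q\<in>F. mobius3 g q = p))"

definition kleinian_finite_covolume :: "cmat set \<Rightarrow> bool" where
  "kleinian_finite_covolume G \<longleftrightarrow> is_psl_subgroup G \<and> discrete_group G \<and> finite_covolume G"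

definition subfield_C :: "complex set \<Rightarrow> bool" where
  "subfield_C K \<longleftrightarrow> 0 \<in> K \<and> 1 \<in> K \<and> (\<forall>x\<in>K. \<forall>y\<in>K. x + y \<in> K \<and> x - y \<in> K \<and> x * y \<in> K)
     \<and> (\<forall>x\<in>K. x \<noteq> 0 \<longrightarrow> inverse x \<in> K)"

definition trace_field :: "cmat set \<Rightarrow> complex set" where
  "trace_field G = \<Inter>{K. subfield_C K \<and> trace ` G \<subseteq> K}"

definition number_field :: "complex set \<Rightarrow> bool" where
  "number_field K \<longleftrightarrow> subfield_C K \<and> (\<exists>B. finite B \<and> B \<subseteq> K \<and>
     (\<forall>x\<in>K. \<exists>c. (\<forall>b\<in>B. c b \<in> \<rat>) \<and> x = (\<Sum>b\<in>B. c b * b)))"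

definition ring_of_integers :: "complex set \<Rightarrow> complex set" where
  "ring_of_integers K = {x \<in> K. algebraic_int x}"

definition commutator :: "cmat \<Rightarrow> cmat \<Rightarrow> cmat" where
  "commutator X Y = X ** Y ** matrix_inv X ** matrix_inv Y"

end

theory Submission
  imports Defs "Jordan_Normal_Form.Char_Poly"
begin

(*
  Let R be the ring of integers of the trace field and, for a pair A, B of
  matrices in SL(2,C) whose traces tr A, tr B, tr AB lie in R, let O(A,B) be the R-module
  spanned by I, A, B, AB.  The Cayley-Hamilton relations show that O(A,B) is closed under
  left multiplication by A and B, hence it is a ring; as inverses in SL(2,C) are
  g^-1 = tr g I - g, it contains the whole group generated by A, B and -I.

  Map a matrix g to its "traceless coordinates" w(g) = (g11 - g22, g12, g21) in C^3.  The
  determinant of the 3x3 matrix with rows w(A), w(B), w(AB) equals tr[A,B] - 2.  If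
  <A,B> = G = <X,Y>, then X, Y, XY lie in O(A,B), so the rows for X, Y arise from those
  for A, B by a change-of-coordinates matrix with entries in R; taking determinants,
  2 - tr[X,Y] = m (2 - tr[A,B]) with m in R, and symmetrically with the roles swapped.
  Hence the two quantities differ by a unit of R (or both vanish).
*)

section \<open>Algebraic integers form a ring\<close>

text \<open>An eigenvalue of an integer matrix (indexed by an arbitrary finite set) is an algebraic
  integer: it is a root of the monic integer characteristic polynomial.\<close>

lemma algebraic_int_eigenvalue:
  fixes D :: "'i \<Rightarrow> 'i \<Rightarrow> int" and w :: "'i \<Rightarrow> complex"
  assumes fin: "finite I" and i0: "i0 \<in> I" "w i0 \<noteq> 0"
    and eigen: "\<forall>i\<in>I. (\<Sum>j\<in>I. of_int (D i j) * w j) = z * w i"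
  shows "algebraic_int z"
proof -
  define n where "n = card I"
  obtain h where h: "bij_betw h {0..<n} I" using ex_bij_betw_nat_finite[OF fin] n_def by blast
  define Dm :: "int mat" where "Dm = mat n n (\<lambda>(a,b). D (h a) (h b))"
  define v :: "complex vec" where "v = vec n (\<lambda>a. w (h a))"
  have Dm: "Dm \<in> carrier_mat n n" by (simp add: Dm_def)
  have mv: "map_mat of_int Dm *\<^sub>v v = z \<cdot>\<^sub>v v"
  proof (rule eq_vecI)
    fix a assume "a < dim_vec (z \<cdot>\<^sub>v v)"
    then have a: "a < n" by (simp add: v_def)
    have ha: "h a \<in> I" using h a by (auto simp: bij_betw_def)
    have "(map_mat of_int Dm *\<^sub>v v) $ a = (\<Sum>b\<in>{0..<n}. of_int (D (h a) (h b)) * w (h b))"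
      using a by (simp add: Dm_def v_def scalar_prod_def)
    also have "\<dots> = (\<Sum>j\<in>I. of_int (D (h a) j) * w j)"
      by (rule sum.reindex_bij_betw[OF h])
    also have "\<dots> = z * w (h a)" using eigen ha by auto
    finally show "(map_mat of_int Dm *\<^sub>v v) $ a = (z \<cdot>\<^sub>v v) $ a" using a by (simp add: v_def)
  qed (simp add: Dm_def v_def)
  obtain a0 where a0: "a0 < n" "h a0 = i0" using h i0 by (auto simp: bij_betw_def)
  have "v \<noteq> 0\<^sub>v n"
  proof
    assume "v = 0\<^sub>v n"
    then have "v $ a0 = 0" using a0 by simp
    then show False using a0 i0 by (simp add: v_def)
  qed
  then have "eigenvector (map_mat of_int Dm) v z"
    unfolding eigenvector_def using mv by (simp add: Dm_def v_def)
  then have "eigenvalue (map_mat of_int Dm) z" unfolding eigenvalue_def by blast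
  then have "poly (char_poly (map_mat (of_int :: int \<Rightarrow> complex) Dm)) z = 0"
    using eigenvalue_root_char_poly Dm by (metis map_carrier_mat)
  then have "poly (map_poly of_int (char_poly Dm)) z = 0"
    by (simp add: of_int_hom.char_poly_hom[OF Dm])
  moreover have "lead_coeff (char_poly Dm) = 1" using degree_monic_char_poly[OF Dm] by simp
  ultimately show ?thesis using algebraic_int_altdef_ipoly by blast
qed

text \<open>Conversely, multiplication by an algebraic integer x is given by an integer matrix on
  the powers 1, x, ..., x^(m-1) (the companion matrix of a monic integer polynomial of x).\<close>

lemma algebraic_int_power_basis:
  fixes x :: complex
  assumes "algebraic_int x"
  shows "\<exists>m>0. \<exists>C :: nat \<Rightarrow> nat \<Rightarrow> int. \<forall>i<m. (\<Sum>i'<m. of_int (C i i') * x^i') = x * x^i"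
proof -
  obtain p where px: "poly (map_poly of_int p) x = 0" and lc: "lead_coeff p = 1"
    using assms algebraic_int_altdef_ipoly by blast
  define m where "m = degree p"
  define C where "C = (\<lambda>i i'. if Suc i < m then (if i' = Suc i then 1 else 0) else - coeff p i')"
  have "m > 0"
  proof (rule ccontr)
    assume "\<not> m > 0"
    then have "p = 1" using lc by (metis degree_0_id m_def neq0_conv one_pCons)
    then show False using px by simp
  qed
  moreover have "(\<Sum>i'<m. of_int (C i i') * x^i') = x * x^i" if i: "i < m" for i
  proof (cases "Suc i < m")
    case True
    then have "(\<Sum>i'<m. of_int (C i i') * x^i') = (\<Sum>i'<m. if i' = Suc i then x^i' else 0)"
      by (intro sum.cong) (auto simp: C_def)
    also have "\<dots> = x^(Suc i)" using True by simp
    finally show ?thesis by simp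
  next
    case False
    have "(\<Sum>i\<le>m. of_int (coeff p i) * x^i) = 0"
      using px by (simp add: poly_altdef degree_map_poly coeff_map_poly m_def)
    then have "- (\<Sum>i'<m. of_int (coeff p i') * x^i') = x^m"
      using lc by (simp add: lessThan_Suc_atMost[symmetric] add_eq_0_iff m_def)
    moreover have "(\<Sum>i'<m. of_int (C i i') * x^i') = - (\<Sum>i'<m. of_int (coeff p i') * x^i')"
      using False by (simp add: C_def sum_negf)
    moreover have "Suc i = m" using i False by simp
    ultimately show ?thesis by (metis power_Suc)
  qed
  ultimately show ?thesis by blast
qed

text \<open>Sums and products of algebraic integers: x + y and x y act by integer matrices on the
  products x^i y^j (Kronecker sum and Kronecker product of the two matrices).\<close>

lemma algebraic_int_add_mult:
  fixes x y :: complex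
  assumes "algebraic_int x" "algebraic_int y"
  shows "algebraic_int (x + y)" and "algebraic_int (x * y)"
proof -
  obtain m Cx where m0: "m > 0" and cx: "\<forall>i<m. (\<Sum>i'<m. of_int (Cx i i') * x^i') = x * x^i"
    using algebraic_int_power_basis[OF assms(1)] by blast
  obtain n Cy where n0: "n > 0" and cy: "\<forall>j<n. (\<Sum>j'<n. of_int (Cy j j') * y^j') = y * y^j"
    using algebraic_int_power_basis[OF assms(2)] by blast
  define I where "I = {..<m} \<times> {..<n}"
  define w where "w = (\<lambda>(i::nat, j::nat). x^i * y^j)"
  have fin: "finite I" and i0: "(0,0) \<in> I" and w0: "w (0,0) \<noteq> 0"
    using m0 n0 by (auto simp: I_def w_def)
  define Ds where "Ds = (\<lambda>(i::nat, j::nat) (i', j').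
    Cx i i' * (if j = j' then 1 else 0) + (if i = i' then 1 else 0) * Cy j j')"
  define Dp where "Dp = (\<lambda>(i::nat, j::nat) (i'::nat, j'::nat). Cx i i' * Cy j j')"
  have "\<forall>k\<in>I. (\<Sum>l\<in>I. of_int (Ds k l) * w l) = (x + y) * w k"
  proof
    fix k assume "k \<in> I"
    then obtain i j where k: "k = (i,j)" "i < m" "j < n" by (auto simp: I_def)
    have "(\<Sum>l\<in>I. of_int (Ds k l) * w l) = (\<Sum>i'<m. \<Sum>j'<n. (of_int (Cx i i') * x^i') * (if j = j' then y^j' else 0)
                     + (if i = i' then x^i' else 0) * (of_int (Cy j j') * y^j'))"
      unfolding I_def sum.cartesian_product by (intro sum.cong refl) (auto simp: k w_def Ds_def algebra_simps)
    also have "\<dots> = (\<Sum>i'<m. of_int (Cx i i') * x^i') * y^j + x^i * (\<Sum>j'<n. of_int (Cy j j') * y^j')"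
    proof -
      have "(\<Sum>i'<m. \<Sum>j'<n. (of_int (Cx i i') * x^i') * (if j = j' then y^j' else 0))
          = (\<Sum>i'<m. of_int (Cx i i') * x^i') * y^j"
        using k by (simp add: sum_distrib_right if_distrib[of "\<lambda>t. _ * t"] cong: if_cong)
      moreover have "(\<Sum>i'<m. \<Sum>j'<n. (if i = i' then x^i' else 0) * (of_int (Cy j j') * y^j'))
          = x^i * (\<Sum>j'<n. of_int (Cy j j') * y^j')"
        using k by (subst sum.swap) (simp add: sum_distrib_left if_distrib[of "\<lambda>t. t * _"] cong: if_cong)
      ultimately show ?thesis by (simp add: sum.distrib)
    qed
    also have "\<dots> = (x + y) * w k" using k cx cy by (simp add: w_def algebra_simps)
    finally show "(\<Sum>l\<in>I. of_int (Ds k l) * w l) = (x + y) * w k" .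
  qed
  then show "algebraic_int (x + y)" using algebraic_int_eigenvalue[OF fin i0, of w] w0 by blast
  have "\<forall>k\<in>I. (\<Sum>l\<in>I. of_int (Dp k l) * w l) = (x * y) * w k"
  proof
    fix k assume "k \<in> I"
    then obtain i j where k: "k = (i,j)" "i < m" "j < n" by (auto simp: I_def)
    have "(\<Sum>l\<in>I. of_int (Dp k l) * w l) = (\<Sum>i'<m. of_int (Cx i i') * x^i') * (\<Sum>j'<n. of_int (Cy j j') * y^j')"
      unfolding I_def sum.cartesian_product sum_product
      by (intro sum.cong refl) (auto simp: k w_def Dp_def)
    also have "\<dots> = (x * y) * w k" using k cx cy by (simp add: w_def algebra_simps)
    finally show "(\<Sum>l\<in>I. of_int (Dp k l) * w l) = (x * y) * w k" .
  qed
  then show "algebraic_int (x * y)" using algebraic_int_eigenvalue[OF fin i0, of w] w0 by blast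
qed

definition subring_C :: "complex set \<Rightarrow> bool" where
  "subring_C P \<longleftrightarrow> 0 \<in> P \<and> 1 \<in> P \<and> (\<forall>x\<in>P. \<forall>y\<in>P. x + y \<in> P \<and> x * y \<in> P \<and> - x \<in> P)"

lemma subring_CD:
  assumes "subring_C P"
  shows "0 \<in> P" "1 \<in> P" "x \<in> P \<Longrightarrow> y \<in> P \<Longrightarrow> x + y \<in> P"
    "x \<in> P \<Longrightarrow> y \<in> P \<Longrightarrow> x * y \<in> P" "x \<in> P \<Longrightarrow> - x \<in> P"
    "x \<in> P \<Longrightarrow> y \<in> P \<Longrightarrow> x - y \<in> P"
  using assms unfolding subring_C_def by (auto, metis diff_conv_add_uminus)

lemma subring_ring_of_integers:
  assumes "subfield_C K"
  shows "subring_C (ring_of_integers K)"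
proof -
  have K: "0 \<in> K" "1 \<in> K" "\<And>x y. x \<in> K \<Longrightarrow> y \<in> K \<Longrightarrow> x + y \<in> K \<and> x - y \<in> K \<and> x * y \<in> K"
    using assms unfolding subfield_C_def by auto
  have "x \<in> K \<Longrightarrow> - x \<in> K" for x using K(1) K(3)[of 0 x] by simp
  then show ?thesis unfolding subring_C_def ring_of_integers_def
    using K algebraic_int_add_mult by auto
qed

lemma mutual_multiples_unit:
  fixes x y m n :: complex
  assumes P: "subring_C P" and mn: "m \<in> P" "n \<in> P" and x: "x = m * y" and y: "y = n * x"
  shows "\<exists>u. u \<noteq> 0 \<and> u \<in> P \<and> inverse u \<in> P \<and> x = u * y"
proof (cases "y = 0")
  case True
  then show ?thesis using x subring_CD(2)[OF P] by (intro exI[of _ 1]) simp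
next
  case False
  then have "n * m = 1" using x y by (metis mult.assoc mult_cancel_right2)
  then have "m \<noteq> 0" and "inverse m = n" by (auto simp: inverse_unique mult.commute)
  then show ?thesis using mn x by auto
qed

section \<open>The order spanned by I, A, B, AB\<close>

hide_const (open) Matrix.mat Matrix.vec Determinant.det Matrix.row Matrix.col
no_notation Matrix.vec_index (infixl "$" 100)

definition order_basis :: "cmat \<Rightarrow> cmat \<Rightarrow> 3 \<Rightarrow> cmat" where
  "order_basis A B k = (if k = 1 then A else if k = 2 then B else A ** B)"

definition order_elt :: "complex \<Rightarrow> complex^3 \<Rightarrow> cmat \<Rightarrow> cmat \<Rightarrow> cmat" where
  "order_elt c0 c A B = (\<chi> i j. c0 * (mat 1 :: cmat)$i$j + (\<Sum>k\<in>UNIV. c$k * order_basis A B k $i$j))"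

definition in_order :: "complex set \<Rightarrow> cmat \<Rightarrow> cmat \<Rightarrow> cmat \<Rightarrow> bool" where
  "in_order P A B g \<longleftrightarrow> (\<exists>c0 c. c0 \<in> P \<and> (\<forall>k. c$k \<in> P) \<and> g = order_elt c0 c A B)"

definition vec3 :: "complex \<Rightarrow> complex \<Rightarrow> complex \<Rightarrow> complex^3" where
  "vec3 a b c = (\<chi> k. if k = 1 then a else if k = 2 then b else c)"

lemma vec3_nth [simp]: "vec3 a b c $ 1 = a" "vec3 a b c $ 2 = b" "vec3 a b c $ 3 = c"
  by (simp_all add: vec3_def)

lemma vec3_in: "a \<in> P \<Longrightarrow> b \<in> P \<Longrightarrow> c \<in> P \<Longrightarrow> \<forall>k. vec3 a b c $ k \<in> P"
  unfolding vec3_def by (simp add: forall_3)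

definition cscale :: "complex \<Rightarrow> cmat \<Rightarrow> cmat" where
  "cscale x M = (\<chi> i j. x * M$i$j)"

lemmas mat2_simps = Finite_Cartesian_Product.vec_eq_iff forall_2 matrix_matrix_mult_def sum_2 sum_3
  Finite_Cartesian_Product.mat_def order_elt_def order_basis_def det_2 trace_def cscale_def

text \<open>Cayley-Hamilton relations (A^2 = tr A A - det A I, and similarly for BA and BAB)
  written in the spanning set: left multiplication by A and by B as linear maps.\<close>

lemma left_mult_A:
  "A ** order_elt d0 d A B =
     order_elt (- det A * d$1) (vec3 (d0 + trace A * d$1) (- det A * d$3) (d$2 + trace A * d$3)) A B"
  by (simp add: mat2_simps algebra_simps)

lemma left_mult_B:
  "B ** order_elt d0 d A B =
     order_elt (d$1 * (trace (A**B) - trace A * trace B) - det B * d$2 - det B * trace A * d$3)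
       (vec3 (d$1 * trace B + det B * d$3) (d0 + d$1 * trace A + d$2 * trace B + d$3 * trace (A**B)) (- d$1))
       A B"
  by (simp add: mat2_simps algebra_simps)

lemma order_elt_mult:
  "order_elt c0 c A B ** H = cscale c0 H + cscale (c$1) (A**H) + cscale (c$2) (B**H) + cscale (c$3) (A**(B**H))"
  by (simp add: mat2_simps algebra_simps)

lemma order_elt_add: "order_elt c0 c A B + order_elt d0 d A B = order_elt (c0 + d0) (c + d) A B"
  by (simp add: mat2_simps algebra_simps)

lemma order_elt_scale: "cscale x (order_elt c0 c A B) = order_elt (x * c0) (x *s c) A B"
  by (simp add: mat2_simps algebra_simps)

lemma in_order_add:
  assumes P: "subring_C P" and "in_order P A B g" "in_order P A B h"
  shows "in_order P A B (g + h)"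
proof -
  obtain c0 c where c: "c0 \<in> P" "\<forall>k. c$k \<in> P" "g = order_elt c0 c A B" using assms in_order_def by blast
  obtain d0 d where d: "d0 \<in> P" "\<forall>k. d$k \<in> P" "h = order_elt d0 d A B" using assms in_order_def by blast
  have "\<forall>k. (c + d)$k \<in> P" "c0 + d0 \<in> P" using c d subring_CD[OF P] by simp_all
  then show ?thesis unfolding in_order_def c(3) d(3) order_elt_add by blast
qed

lemma in_order_scale:
  assumes P: "subring_C P" and "x \<in> P" "in_order P A B g"
  shows "in_order P A B (cscale x g)"
proof -
  obtain c0 c where c: "c0 \<in> P" "\<forall>k. c$k \<in> P" "g = order_elt c0 c A B" using assms in_order_def by blast
  have "\<forall>k. (x *s c)$k \<in> P" "x * c0 \<in> P" using c subring_CD[OF P] assms(2) by simp_all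
  then show ?thesis unfolding in_order_def c(3) order_elt_scale by blast
qed

lemma in_order_one: "subring_C P \<Longrightarrow> in_order P A B (mat 1)"
  unfolding in_order_def by (intro exI[of _ 1] exI[of _ 0]) (auto simp: subring_CD mat2_simps)

lemma in_order_minus_one: "subring_C P \<Longrightarrow> in_order P A B (- mat 1)"
  unfolding in_order_def by (intro exI[of _ "-1"] exI[of _ 0]) (auto simp: subring_CD mat2_simps)

lemma in_order_A: "subring_C P \<Longrightarrow> in_order P A B A"
  unfolding in_order_def by (intro exI[of _ 0] exI[of _ "vec3 1 0 0"]) (auto simp: subring_CD mat2_simps vec3_in)

lemma in_order_B: "subring_C P \<Longrightarrow> in_order P A B B"
  unfolding in_order_def by (intro exI[of _ 0] exI[of _ "vec3 0 1 0"]) (auto simp: subring_CD mat2_simps vec3_in)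

lemma in_order_left_A:
  assumes P: "subring_C P" and dA: "det A = 1" and tA: "trace A \<in> P" and g: "in_order P A B g"
  shows "in_order P A B (A ** g)"
proof -
  obtain c0 c where c: "c0 \<in> P" "\<forall>k. c$k \<in> P" "g = order_elt c0 c A B" using g in_order_def by blast
  have "\<forall>k. vec3 (c0 + trace A * c$1) (- c$3) (c$2 + trace A * c$3) $ k \<in> P"
    by (intro vec3_in subring_CD[OF P]) (use c tA in auto)
  moreover have "- c$1 \<in> P" using c subring_CD[OF P] by auto
  ultimately show ?thesis unfolding in_order_def c(3) left_mult_A dA by auto
qed

lemma in_order_left_B:
  assumes P: "subring_C P" and dB: "det B = 1"
    and tr: "trace A \<in> P" "trace B \<in> P" "trace (A ** B) \<in> P" and g: "in_order P A B g"
  shows "in_order P A B (B ** g)"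
proof -
  obtain c0 c where c: "c0 \<in> P" "\<forall>k. c$k \<in> P" "g = order_elt c0 c A B" using g in_order_def by blast
  have "\<forall>k. vec3 (c$1 * trace B + c$3) (c0 + c$1 * trace A + c$2 * trace B + c$3 * trace (A**B)) (- c$1) $ k \<in> P"
    by (intro vec3_in subring_CD[OF P]) (use c tr in auto)
  moreover have "c$1 * (trace (A**B) - trace A * trace B) - c$2 - trace A * c$3 \<in> P"
    by (intro subring_CD[OF P]) (use c tr in auto)
  ultimately show ?thesis unfolding in_order_def c(3) left_mult_B dB mult_1 mult_1_right by auto
qed

lemma in_order_mult:
  assumes P: "subring_C P" and d: "det A = 1" "det B = 1"
    and tr: "trace A \<in> P" "trace B \<in> P" "trace (A ** B) \<in> P"
    and g: "in_order P A B g" and h: "in_order P A B h"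
  shows "in_order P A B (g ** h)"
proof -
  obtain c0 c where c: "c0 \<in> P" "\<forall>k. c$k \<in> P" "g = order_elt c0 c A B" using g in_order_def by blast
  have hB: "in_order P A B (B ** h)" by (rule in_order_left_B[OF P d(2) tr h])
  show ?thesis unfolding c(3) order_elt_mult
    by (intro in_order_add[OF P] in_order_scale[OF P] in_order_left_A[OF P d(1) tr(1)] hB h) (use c in auto)
qed

definition adj2 :: "cmat \<Rightarrow> cmat" where
  "adj2 M = cscale (trace M) (mat 1) + cscale (-1) M"

lemma matrix_inv_det_one:
  assumes d: "det M = 1"
  shows "matrix_inv M = adj2 M"
proof -
  have h: "M ** adj2 M = mat 1" "adj2 M ** M = mat 1"
    using d by (simp_all add: mat2_simps adj2_def algebra_simps)
  have i: "M ** matrix_inv M = mat 1"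
    unfolding matrix_inv_def by (rule conjunct1[OF someI_ex]) (use h in blast)
  have "adj2 M = adj2 M ** (M ** matrix_inv M)" using i by simp
  also have "\<dots> = matrix_inv M" using h by (simp add: matrix_mul_assoc)
  finally show ?thesis by simp
qed

lemma generated_in_order:
  assumes P: "subring_C P" and gen: "gen_sub {A, B, - mat 1} = G" and SL: "G \<subseteq> SL2C"
    and tr: "\<forall>g\<in>G. trace g \<in> P" and gG: "g \<in> G"
  shows "in_order P A B g"
proof -
  have "A \<in> gen_sub {A, B, - mat 1}" "B \<in> gen_sub {A, B, - mat 1}"
    by (rule gen_sub.gen_base, simp)+
  then have "A \<in> G" "B \<in> G" "A ** B \<in> G" using gen gen_sub.gen_mult by auto
  then have d: "det A = 1" "det B = 1" and tAB: "trace A \<in> P" "trace B \<in> P" "trace (A ** B) \<in> P"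
    using SL tr by (auto simp: SL2C_def)
  have "g \<in> gen_sub {A, B, - mat 1} \<Longrightarrow> in_order P A B g"
  proof (induction rule: gen_sub.induct)
    case gen_one then show ?case by (rule in_order_one[OF P])
  next
    case (gen_base s)
    then show ?case using in_order_A[OF P] in_order_B[OF P] in_order_minus_one[OF P] by auto
  next
    case (gen_mult g h) then show ?case using in_order_mult[OF P d tAB] by simp
  next
    case (gen_inv g)
    have "g \<in> G" using gen_inv.hyps gen by simp
    then have dg: "det g = 1" and tg: "trace g \<in> P" using SL tr by (auto simp: SL2C_def)
    have "- 1 \<in> P" using subring_CD[OF P] by simp
    then show ?case unfolding matrix_inv_det_one[OF dg] adj2_def
      by (intro in_order_add[OF P] in_order_scale[OF P] in_order_one[OF P] tg gen_inv.IH)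
  qed
  then show ?thesis using gG gen by simp
qed

section \<open>Traceless coordinates and the commutator trace\<close>

text \<open>The traceless coordinates of g; they kill the identity, so they see O(A,B) only through
  the coefficients of A, B, AB.\<close>

definition traceless_coords :: "cmat \<Rightarrow> complex^3" where
  "traceless_coords g = vec3 (g$1$1 - g$2$2) (g$1$2) (g$2$1)"

definition coord_matrix :: "(3 \<Rightarrow> cmat) \<Rightarrow> complex^3^3" where
  "coord_matrix e = (\<chi> i. traceless_coords (e i))"

lemma traceless_coords_order_elt:
  "traceless_coords (order_elt c0 c A B) = (\<chi> j. \<Sum>k\<in>UNIV. c$k * traceless_coords (order_basis A B k) $ j)"
  unfolding Finite_Cartesian_Product.vec_eq_iff forall_3
  by (simp add: traceless_coords_def mat2_simps algebra_simps)

lemma coord_matrix_change: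
  assumes e: "\<forall>i. in_order P A B (e i)"
  shows "\<exists>M. (\<forall>i k. M$i$k \<in> P) \<and> coord_matrix e = M ** coord_matrix (order_basis A B)"
proof -
  obtain f where f: "\<forall>i. \<exists>c0. (\<forall>k. f i $k \<in> P) \<and> e i = order_elt c0 (f i) A B"
    using e unfolding in_order_def by metis
  define M :: "complex^3^3" where "M = (\<chi> i. f i)"
  have "coord_matrix e = M ** coord_matrix (order_basis A B)"
  proof (subst Finite_Cartesian_Product.vec_eq_iff, intro allI)
    fix i
    obtain c0 where "e i = order_elt c0 (f i) A B" using f by blast
    then show "coord_matrix e $ i = (M ** coord_matrix (order_basis A B)) $ i"
      by (simp add: coord_matrix_def M_def traceless_coords_order_elt matrix_matrix_mult_def)
  qed
  moreover have "\<forall>i k. M$i$k \<in> P" using f unfolding M_def by simp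
  ultimately show ?thesis by blast
qed

lemma det3_in_subring:
  assumes P: "subring_C P" and M: "\<forall>i j. (M::complex^3^3)$i$j \<in> P"
  shows "det M \<in> P"
  unfolding det_3 by (intro subring_CD[OF P]) (use M in auto)

lemma det_coord_matrix_commutator:
  assumes "det A = 1" "det B = 1"
  shows "det (coord_matrix (order_basis A B)) = trace (commutator A B) - 2"
proof -
  have "det (coord_matrix (order_basis A B)) = trace (A ** B ** adj2 A ** adj2 B) - 2 * det A * det B"
    by (simp add: det_3 coord_matrix_def traceless_coords_def adj2_def
        mat2_simps algebra_simps)
  then show ?thesis using assms by (simp add: commutator_def matrix_inv_det_one)
qed

lemma commutator_trace_multiple:
  assumes P: "subring_C P" and SL: "G \<subseteq> SL2C" and clos: "\<forall>g\<in>G. \<forall>h\<in>G. g ** h \<in> G"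
    and tr: "\<forall>g\<in>G. trace g \<in> P" and gen: "gen_sub {A, B, - mat 1} = G"
    and AB: "A \<in> G" "B \<in> G" and XY: "X \<in> G" "Y \<in> G"
  shows "\<exists>m\<in>P. 2 - trace (commutator X Y) = m * (2 - trace (commutator A B))"
proof -
  have "\<forall>i. order_basis X Y i \<in> G" using XY clos by (simp add: order_basis_def)
  then have "\<forall>i. in_order P A B (order_basis X Y i)"
    using generated_in_order[OF P gen SL tr] by blast
  then obtain M where M: "\<forall>i k. M$i$k \<in> P"
    and change: "coord_matrix (order_basis X Y) = M ** coord_matrix (order_basis A B)"
    using coord_matrix_change by blast
  have d: "det A = 1" "det B = 1" "det X = 1" "det Y = 1" using AB XY SL by (auto simp: SL2C_def)
  have "trace (commutator X Y) - 2 = det (coord_matrix (order_basis X Y))"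
    using det_coord_matrix_commutator[OF d(3,4)] by simp
  also have "\<dots> = det M * det (coord_matrix (order_basis A B))" using change by (simp add: det_mul)
  also have "\<dots> = det M * (trace (commutator A B) - 2)"
    using det_coord_matrix_commutator[OF d(1,2)] by simp
  finally have "trace (commutator X Y) - 2 = det M * (trace (commutator A B) - 2)" .
  then have "2 - trace (commutator X Y) = det M * (2 - trace (commutator A B))"
    by (simp add: algebra_simps)
  then show ?thesis using det3_in_subring[OF P M] by blast
qed

theorem mainTheorem5:
  fixes G :: "cmat set" and A B X Y :: cmat
  assumes "kleinian_finite_covolume G"
    and "number_field (trace_field G)"
    and "trace ` G \<subseteq> ring_of_integers (trace_field G)"
    and "A \<in> G" "B \<in> G" "X \<in> G" "Y \<in> G"
    and "gen_sub {A, B, - mat 1} = G"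
    and "gen_sub {X, Y, - mat 1} = G"
  shows "\<exists>u. u \<noteq> 0 \<and> u \<in> ring_of_integers (trace_field G) \<and> inverse u \<in> ring_of_integers (trace_field G) \<and>
           2 - trace (commutator X Y) = u * (2 - trace (commutator A B))"
proof -
  define R where "R = ring_of_integers (trace_field G)"
  have R: "subring_C R"
    unfolding R_def using assms(2) by (simp add: subring_ring_of_integers number_field_def)
  have SL: "G \<subseteq> SL2C" and clos: "\<forall>g\<in>G. \<forall>h\<in>G. g ** h \<in> G"
    using assms(1) by (auto simp: kleinian_finite_covolume_def is_psl_subgroup_def)
  have tr: "\<forall>g\<in>G. trace g \<in> R" using assms(3) by (auto simp: R_def)
  obtain m where m: "m \<in> R" "2 - trace (commutator X Y) = m * (2 - trace (commutator A B))"
    using commutator_trace_multiple[OF R SL clos tr assms(8,4,5,6,7)] by blast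
  obtain n where n: "n \<in> R" "2 - trace (commutator A B) = n * (2 - trace (commutator X Y))"
    using commutator_trace_multiple[OF R SL clos tr assms(9,6,7,4,5)] by blast
  show ?thesis unfolding R_def[symmetric] by (rule mutual_multiples_unit[OF R m(1) n(1) m(2) n(2)])
qed

end
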